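(* Let $m\ge d\ge1$, $\lambda=d/m$, and let $A,B$ be real $m\times d$ matrices with $p(x,y)=y^{m-d}\det(xyI_d-A^TA)$ and $q(x,y)=y^{m-d}\det(xyI_d-B^TB)$. Then there exists a real $m\times d$ matrix $C$ such that $[p\boxplus_{d,\lambda}q](x,y)=y^{m-d}\det(xyI_d-C^TC)$.
   Context: For univariate $p(x)=\sum_{i=0}^d(-1)^ia_ix^{d-i}$, $q(x)=\sum(-1)^ib_ix^{d-i}$: $(p\boxplus_{d,\lambda}q)(x)=\sum_{k=0}^dx^{d-k}(-1)^k\sum_{i+j=k}\frac{(d-i)!(d-j)!}{d!(d-k)!}\frac{(m-i)!(m-j)!}{m!(m-k)!}a_ib_j$, which equals the average over Haar $Q\in\mathcal O_m$, $R\in\mathcal O_d$ of $\det(xI_d-(A+QBR)^T(A+QBR))$ when $p=\det(xI_d-A^TA)$, $q=\det(xI_d-B^TB)$. Bivariate version: for $p(x,y)=y^{m-d}p(xy)$, $q(x,y)=y^{m-d}q(xy)$, $[p\boxplus_{d,\lambda}q](x,y):=y^{m-d}(p\boxplus_{d,\lambda}q)(xy)$ (equivalently the Haar average of $y^{m-d}\det(xyI_d-(A+QBR)^T(A+QBR))$). *)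

theory Defs
  imports "HOL-Analysis.Analysis" "HOL-Computational_Algebra.Polynomial"
begin

text \<open>Signed coefficient a_i of a degree-d polynomial written as
  p(x) = sum_{i=0}^d (-1)^i a_i x^(d-i).\<close>
definition sgn_coeff :: "nat \<Rightarrow> real poly \<Rightarrow> nat \<Rightarrow> real" where
  "sgn_coeff d p i = (-1) ^ i * coeff p (d - i)"

text \<open>Rectangular additive convolution  p boxplus_{d,lambda} q  with lambda = d/m.\<close>
definition rect_conv :: "nat \<Rightarrow> nat \<Rightarrow> real poly \<Rightarrow> real poly \<Rightarrow> real poly" where
  "rect_conv d m p q =
     (\<Sum>k\<in>{0..d}. monom ((-1) ^ k *
        (\<Sum>i\<in>{0..k}. let j = k - i in
           (fact (d - i) * fact (d - j)) / (fact d * fact (d - k)) *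
           ((fact (m - i) * fact (m - j)) / (fact m * fact (m - k))) *
           sgn_coeff d p i * sgn_coeff d q j)) (d - k))"

end

theory Submission
  imports Defs "HOL-Computational_Algebra.Fundamental_Theorem_Algebra"
begin

text \<open>
  The argument is that of Marcus, Spielman and Srivastava. The roots of \<open>p\<close> and \<open>q\<close> are
  eigenvalues of the positive semidefinite matrices \<open>A\<^sup>T A\<close> and \<open>B\<^sup>T B\<close>, hence real and
  nonnegative. Polarize \<open>u\<^bsup>m-d\<^esup> p(s u)\<close> into a multiaffine polynomial in \<open>d\<close>
  variables \<open>x\<^sub>i\<close> and \<open>m\<close> variables \<open>y\<^sub>j\<close>. Since \<open>s u\<close> is never a nonnegative
  real for \<open>s, u\<close> in the upper half plane, the Grace--Walsh--Szego theorem shows that this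
  polynomial has no zeros with all variables in the upper half plane. The operators
  \<open>1 - \<beta> \<partial>/\<partial>x\<^sub>l \<partial>/\<partial>y\<^sub>l\<close> with \<open>\<beta> \<ge> 0\<close> preserve this property
  (Lieb--Sokal); applying them for the roots \<open>\<beta>\<^sub>1, ..., \<beta>\<^sub>d\<close> of \<open>q\<close> and then
  setting all variables equal to \<open>w\<close> yields \<open>w\<^bsup>m-d\<^esup> (p \<boxplus> q)(w\<^sup>2)\<close>. As every
  \<open>t\<close> outside \<open>[0, \<infinity>)\<close> is the square of some \<open>w\<close> in the upper half plane, the monic
  polynomial \<open>p \<boxplus> q\<close> of degree \<open>d\<close> has nonnegative roots \<open>\<gamma>\<^sub>i\<close> only, so it is the
  characteristic polynomial of \<open>C\<^sup>T C\<close> for the \<open>m \<times> d\<close> matrix \<open>C\<close> with diagonal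
  entries \<open>sqrt \<gamma>\<^sub>i\<close>.
\<close>

section \<open>Real polynomials with nonnegative roots\<close>

lemma poly_map_poly_of_real:
  "poly (map_poly of_real p) (of_real x) = (of_real (poly p x) :: 'a::{real_algebra_1,comm_ring_1})"
  by (induction p) (auto simp: map_poly_pCons)

lemma map_poly_of_real_eqI:
  fixes p :: "real poly" and q :: "complex poly"
  assumes "\<And>x. poly q (of_real x) = of_real (poly p x)"
  shows "map_poly of_real p = q"
proof (rule ccontr)
  assume "map_poly of_real p \<noteq> q"
  hence "finite {z. poly (map_poly of_real p - q) z = 0}"
    by (intro poly_roots_finite) simp
  moreover have "range complex_of_real \<subseteq> {z. poly (map_poly of_real p - q) z = 0}"
    using assms by (auto simp: poly_map_poly_of_real)
  ultimately have "finite (range complex_of_real)"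
    by (rule finite_subset[rotated])
  moreover have "inj complex_of_real"
    by (rule injI) simp
  ultimately show False
    using finite_imageD infinite_UNIV_char_0 by blast
qed

lemma poly_map_poly_of_real_sum_monom:
  "poly (map_poly of_real (\<Sum>k\<in>A. monom (r k) (n k))) (z :: complex) = (\<Sum>k\<in>A. of_real (r k) * z ^ n k)"
proof -
  have "map_poly of_real (\<Sum>k\<in>A. monom (r k) (n k)) = (\<Sum>k\<in>A. monom (complex_of_real (r k)) (n k))"
    by (rule map_poly_of_real_eqI) (simp add: poly_sum poly_monom)
  thus ?thesis
    by (simp add: poly_sum poly_monom)
qed

lemma poly_map_poly_of_real_linear_factors:
  fixes \<alpha> :: "nat \<Rightarrow> real"
  shows "poly (map_poly of_real (\<Prod>i<n. [:- \<alpha> i, 1:])) z = (\<Prod>i<n. z - of_real (\<alpha> i) :: complex)"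
proof -
  have "map_poly of_real (\<Prod>i<n. [:- \<alpha> i, 1:]) = (\<Prod>i<n. [:- complex_of_real (\<alpha> i), 1:])"
    by (rule map_poly_of_real_eqI) (simp add: poly_prod)
  thus ?thesis
    by (simp add: poly_prod)
qed

lemma nonneg_rooted_nonzero:
  fixes \<alpha> :: "nat \<Rightarrow> real" and z :: complex
  assumes "\<And>i. 0 \<le> \<alpha> i" "z \<notin> \<real>\<^sub>\<ge>\<^sub>0"
  shows "poly (map_poly of_real (\<Prod>i<n. [:- \<alpha> i, 1:])) z \<noteq> 0"
proof
  assume "poly (map_poly of_real (\<Prod>i<n. [:- \<alpha> i, 1:])) z = 0"
  then obtain i where "z = of_real (\<alpha> i)"
    unfolding poly_map_poly_of_real_linear_factors by auto
  with assms show False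
    by simp
qed

lemma monic_linear_factors:
  fixes \<alpha> :: "nat \<Rightarrow> real"
  shows "degree (\<Prod>i<n. [:- \<alpha> i, 1:]) = n" "coeff (\<Prod>i<n. [:- \<alpha> i, 1:]) n = 1"
proof -
  show deg: "degree (\<Prod>i<n. [:- \<alpha> i, 1:]) = n"
    by (simp add: degree_prod_sum_eq)
  show "coeff (\<Prod>i<n. [:- \<alpha> i, 1:]) n = 1"
    using lead_coeff_prod[of "\<lambda>i. [:- \<alpha> i, 1:]" "{..<n}"] unfolding deg by simp
qed

lemma poly_as_sum:
  fixes p :: "'a::comm_semiring_1 poly"
  assumes "degree p \<le> n"
  shows "poly p z = (\<Sum>a\<le>n. coeff p a * z ^ a)"
  unfolding poly_altdef using assms by (intro sum.mono_neutral_left) (auto simp: coeff_eq_0)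

lemma coeff_prod_linear_factors:
  fixes \<beta> :: "nat \<Rightarrow> 'a::comm_ring_1"
  assumes "j \<le> D"
  shows "coeff (\<Prod>i<D. [:- \<beta> i, 1:]) (D - j) = (\<Sum>L | L \<subseteq> {..<D} \<and> card L = j. \<Prod>l\<in>L. - \<beta> l)"
proof -
  have "(\<Prod>i<D. [:- \<beta> i, 1:]) = (\<Prod>i<D. [:- \<beta> i:] + monom 1 1)"
    by (intro prod.cong refl) (simp add: monom_Suc)
  also have "\<dots> = (\<Sum>L\<in>Pow {..<D}. (\<Prod>l\<in>L. [:- \<beta> l:]) * (\<Prod>i\<in>{..<D} - L. monom 1 1))"
    by (rule prod_add) simp
  also have "\<dots> = (\<Sum>L\<in>Pow {..<D}. monom (\<Prod>l\<in>L. - \<beta> l) (D - card L))"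
  proof (intro sum.cong refl)
    fix L
    assume "L \<in> Pow {..<D}"
    hence "card ({..<D} - L) = D - card L"
      by (auto simp: card_Diff_subset finite_subset)
    moreover have "(\<Prod>l\<in>L. [:- \<beta> l:]) = [:\<Prod>l\<in>L. - \<beta> l:]"
      by (induction L rule: infinite_finite_induct) simp_all
    ultimately show "(\<Prod>l\<in>L. [:- \<beta> l:]) * (\<Prod>i\<in>{..<D} - L. monom 1 1) = monom (\<Prod>l\<in>L. - \<beta> l) (D - card L)"
      by (simp add: monom_altdef smult_conv_map_poly)
  qed
  moreover have "(D - card L = D - j) = (card L = j)" if "L \<subseteq> {..<D}" for L
    using card_mono[OF _ that] assms by auto
  ultimately have "coeff (\<Prod>i<D. [:- \<beta> i, 1:]) (D - j)
      = (\<Sum>L\<in>Pow {..<D}. if card L = j then \<Prod>l\<in>L. - \<beta> l else 0)"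
    by (auto simp: coeff_sum intro!: sum.cong)
  also have "\<dots> = (\<Sum>L | L \<subseteq> {..<D} \<and> card L = j. \<Prod>l\<in>L. - \<beta> l)"
    by (subst sum.inter_filter[symmetric]) (auto intro!: sum.cong_simp)
  finally show ?thesis .
qed

lemma monic_nonneg_rooted_factor:
  fixes r :: "real poly"
  assumes deg: "degree r = n" and monic: "lead_coeff r = 1"
    and roots: "\<And>z. poly (map_poly complex_of_real r) z = 0 \<Longrightarrow> z \<in> \<real>\<^sub>\<ge>\<^sub>0"
  shows "\<exists>\<alpha>. (\<forall>i. 0 \<le> \<alpha> i) \<and> r = (\<Prod>i<n. [:- \<alpha> i, 1:])"
proof -
  define rc where "rc = map_poly complex_of_real r"
  have "degree rc = n" "lead_coeff rc = 1"
    using deg monic by (simp_all add: rc_def degree_map_poly coeff_map_poly)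
  moreover obtain \<rho> :: "nat \<Rightarrow> complex" where "smult (lead_coeff rc) (\<Prod>i<degree rc. [:- \<rho> i, 1:]) = rc"
    using complex_poly_decompose' by blast
  ultimately have rc: "rc = (\<Prod>i<n. [:- \<rho> i, 1:])"
    by simp
  have "\<rho> i \<in> \<real>\<^sub>\<ge>\<^sub>0" if "i < n" for i
    using roots[of "\<rho> i"] that unfolding rc_def[symmetric] rc by (auto simp: poly_prod)
  hence \<rho>: "complex_of_real (Re (\<rho> i)) = \<rho> i" "0 \<le> Re (\<rho> i)" if "i < n" for i
    using that by (auto simp: complex_nonneg_Reals_iff complex_eq_iff)
  define \<alpha> where "\<alpha> i = (if i < n then Re (\<rho> i) else 0)" for i
  have "of_real (poly r x) = poly rc (of_real x)" for x
    by (simp add: rc_def poly_map_poly_of_real)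
  hence "of_real (poly r x) = (of_real (poly (\<Prod>i<n. [:- \<alpha> i, 1:]) x) :: complex)" for x
    using \<rho> by (simp add: rc poly_prod \<alpha>_def)
  hence "poly r = poly (\<Prod>i<n. [:- \<alpha> i, 1:])"
    by (simp add: fun_eq_iff)
  moreover have "0 \<le> \<alpha> i" for i
    using \<rho> by (simp add: \<alpha>_def)
  ultimately show ?thesis
    by (auto simp: poly_eq_poly_eq_iff)
qed

section \<open>Characteristic polynomials of Gram matrices\<close>

definition charpoly :: "'a::comm_ring_1^'n^'n \<Rightarrow> 'a poly" where
  "charpoly N = (\<Sum>\<sigma> | \<sigma> permutes (UNIV :: 'n set). smult (of_int (sign \<sigma>))
     (\<Prod>i\<in>UNIV. if \<sigma> i = i then [:- N$i$i, 1:] else [:- N$i$\<sigma> i:]))"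

lemma poly_charpoly: "poly (charpoly N) z = det (mat z - N)"
  unfolding charpoly_def det_def poly_sum
  by (intro sum.cong refl) (auto simp: poly_prod mat_def intro!: prod.cong arg_cong2[where f = "(*)"])

lemma charpoly_eqI:
  fixes M :: "real^'n^'n"
  assumes "\<forall>x. poly p x = det (x *\<^sub>R mat 1 - M)"
  shows "p = charpoly M"
proof -
  have "x *\<^sub>R mat 1 = (mat x :: real^'n^'n)" for x
    by (simp add: vec_eq_iff mat_def)
  hence "poly p = poly (charpoly M)"
    using assms by (simp add: fun_eq_iff poly_charpoly)
  thus ?thesis
    by (simp add: poly_eq_poly_eq_iff)
qed

lemma coeff_prod_linear_card:
  fixes f :: "'b \<Rightarrow> 'a::comm_ring_1 poly"
  assumes "finite A" "\<And>i. i \<in> A \<Longrightarrow> degree (f i) \<le> 1"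
  shows "coeff (prod f A) (card A) = (\<Prod>i\<in>A. coeff (f i) 1)"
  using assms
proof (induction A rule: finite_induct)
  case (insert a A)
  have "degree (prod f A) \<le> card A"
    using degree_prod_sum_le[OF \<open>finite A\<close>, of f] sum_bounded_above[of A "degree \<circ> f" 1] insert.prems
    by simp
  hence top: "coeff (prod f A) (Suc (card A)) = 0"
    by (simp add: coeff_eq_0)
  have "degree (f a) \<le> 1"
    using insert.prems by simp
  hence "f a = pCons (coeff (f a) 0) [:coeff (f a) 1:]"
    by (intro poly_eqI) (auto simp: coeff_pCons coeff_eq_0 split: nat.splits)
  hence "coeff (f a * prod f A) (Suc (card A)) = coeff (f a) 1 * coeff (prod f A) (card A)"
    by (metis (no_types) top coeff_add coeff_pCons_Suc coeff_smult mult_pCons_left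
        mult_zero_right add_0 smult_one mult_1 mult_smult_left)
  with insert show ?case by simp
qed simp

lemma charpoly_monic:
  fixes N :: "'a::comm_ring_1^'n^'n"
  shows "degree (charpoly N) = CARD('n)" "lead_coeff (charpoly N) = 1"
proof -
  define h where "h \<sigma> i = (if \<sigma> i = i then [:- N$i$i, 1:] else [:- N$i$\<sigma> i:])"
    for \<sigma> :: "'n \<Rightarrow> 'n" and i
  have deg_h: "degree (h \<sigma> i) \<le> 1" for \<sigma> i
    unfolding h_def by auto
  have coeff_h: "coeff (h \<sigma> i) 1 = (if \<sigma> i = i then 1 else 0)" for \<sigma> i
    unfolding h_def by auto
  have deg_prod: "degree (prod (h \<sigma>) UNIV) \<le> CARD('n)" for \<sigma>
    using degree_prod_sum_le[of UNIV "h \<sigma>"] sum_bounded_above[of UNIV "degree \<circ> h \<sigma>" 1] deg_h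
    by simp
  have coeff_prod: "coeff (prod (h \<sigma>) UNIV) CARD('n) = (if \<sigma> = id then 1 else 0)" for \<sigma>
  proof -
    have "coeff (prod (h \<sigma>) UNIV) CARD('n) = (\<Prod>i\<in>UNIV. coeff (h \<sigma> i) 1)"
      using coeff_prod_linear_card[of UNIV "h \<sigma>"] deg_h by simp
    also have "\<dots> = (\<Prod>i\<in>UNIV. if \<sigma> i = i then 1 else 0)"
      by (simp only: coeff_h)
    also have "\<dots> = (if \<sigma> = id then 1 else 0)"
      by (cases "\<sigma> = id") (auto simp: fun_eq_iff intro!: prod_zero)
    finally show ?thesis .
  qed
  have cp: "charpoly N = (\<Sum>\<sigma> | \<sigma> permutes (UNIV :: 'n set). smult (of_int (sign \<sigma>)) (prod (h \<sigma>) UNIV))"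
    unfolding charpoly_def h_def ..
  have le: "degree (charpoly N) \<le> CARD('n)"
    unfolding cp by (intro degree_sum_le) (auto intro: order_trans[OF degree_smult_le] deg_prod)
  have top: "coeff (charpoly N) CARD('n) = 1"
    unfolding cp coeff_sum coeff_smult coeff_prod
    by (simp add: if_distrib cong: if_cong)
  show "degree (charpoly N) = CARD('n)"
    using le le_degree[of "charpoly N" "CARD('n)"] top by simp
  with top show "lead_coeff (charpoly N) = 1"
    by simp
qed

lemma map_poly_of_real_charpoly:
  "map_poly of_real (charpoly M) = charpoly (map_matrix complex_of_real M)"
proof (rule map_poly_of_real_eqI)
  fix x
  have "poly (charpoly (map_matrix of_real M)) (of_real x) = det (mat (of_real x) - map_matrix of_real M)"
    by (rule poly_charpoly)
  also have "\<dots> = det (map_matrix of_real (mat x - M))"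
    by (rule arg_cong[where f = det]) (simp add: vec_eq_iff mat_def)
  also have "\<dots> = of_real (poly (charpoly M) x)"
    unfolding poly_charpoly det_def by simp
  finally show "poly (charpoly (map_matrix of_real M)) (of_real x) = of_real (poly (charpoly M) x)" .
qed

lemma real_matrix_quadratic_form:
  fixes A :: "real^'n^'m" and u :: "complex^'n"
  defines "A' \<equiv> map_matrix complex_of_real A"
  shows "(\<Sum>i\<in>UNIV. cnj (u$i) * (transpose A' *v (A' *v u))$i)
       = (\<Sum>k\<in>UNIV. of_real ((cmod ((A' *v u)$k))\<^sup>2))"
proof -
  define w where "w = A' *v u"
  have cnj_w: "cnj (w$k) = (\<Sum>i\<in>UNIV. A'$k$i * cnj (u$i))" for k
    by (simp add: w_def A'_def matrix_vector_mult_def)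
  have "(\<Sum>i\<in>UNIV. cnj (u$i) * (transpose A' *v w)$i) = (\<Sum>i\<in>UNIV. \<Sum>k\<in>UNIV. cnj (u$i) * (A'$k$i * w$k))"
    by (simp add: matrix_vector_mult_def transpose_def sum_distrib_left)
  also have "\<dots> = (\<Sum>k\<in>UNIV. \<Sum>i\<in>UNIV. cnj (u$i) * (A'$k$i * w$k))"
    by (rule sum.swap)
  also have "\<dots> = (\<Sum>k\<in>UNIV. cnj (w$k) * w$k)"
    by (simp add: cnj_w sum_distrib_left mult_ac)
  also have "\<dots> = (\<Sum>k\<in>UNIV. of_real ((cmod (w$k))\<^sup>2))"
    by (intro sum.cong refl) (metis complex_norm_square mult.commute)
  finally show ?thesis
    unfolding w_def[symmetric] .
qed

lemma gram_eigenvalue_nonneg: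
  fixes A :: "real^'d^'m" and z :: complex
  assumes "det (mat z - map_matrix of_real (transpose A ** A)) = 0"
  shows "z \<in> \<real>\<^sub>\<ge>\<^sub>0"
proof -
  define A' where "A' = map_matrix complex_of_real A"
  have gram: "map_matrix of_real (transpose A ** A) = transpose A' ** A'"
    by (simp add: A'_def vec_eq_iff matrix_matrix_mult_def transpose_def)
  obtain u where u: "(mat z - transpose A' ** A') *v u = 0" "u \<noteq> 0"
    using assms invertible_det_nz[of "mat z - transpose A' ** A'"] unfolding gram
    by (auto simp: invertible_left_inverse matrix_left_invertible_ker)
  have "(\<Sum>j\<in>UNIV. (if i = j then z else 0) * u$j) = z * u$i" for i
    by (subst sum.cong[OF refl, of _ _ "\<lambda>j. if i = j then z * u$j else 0"]) auto
  hence "mat z *v u = z *s u"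
    by (simp add: vec_eq_iff matrix_vector_mult_def mat_def)
  hence "transpose A' *v (A' *v u) = z *s u"
    using u(1) by (simp add: matrix_vector_mult_diff_rdistrib matrix_vector_mul_assoc)
  hence "z * (\<Sum>i\<in>UNIV. cnj (u$i) * u$i) = (\<Sum>k\<in>UNIV. of_real ((cmod ((A' *v u)$k))\<^sup>2))"
    using real_matrix_quadratic_form[of u A, folded A'_def] by (simp add: sum_distrib_left mult_ac)
  moreover have norm_sq: "cnj c * c = of_real ((cmod c)\<^sup>2)" for c
    by (metis complex_norm_square mult.commute)
  ultimately have "z * of_real (\<Sum>i\<in>UNIV. (cmod (u$i))\<^sup>2) = of_real (\<Sum>k\<in>UNIV. (cmod ((A' *v u)$k))\<^sup>2)"
    by (simp only: norm_sq of_real_sum)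
  moreover obtain i0 where "u$i0 \<noteq> 0"
    using u(2) by (auto simp: vec_eq_iff)
  hence "(\<Sum>i\<in>UNIV. (cmod (u$i))\<^sup>2) \<noteq> 0"
    by (intro order.strict_implies_not_eq[symmetric] sum_pos2[of UNIV i0]) auto
  ultimately have "z = of_real ((\<Sum>k\<in>UNIV. (cmod ((A' *v u)$k))\<^sup>2) / (\<Sum>i\<in>UNIV. (cmod (u$i))\<^sup>2))"
    by (simp add: field_simps del: of_real_sum of_real_power)
  thus ?thesis
    by (simp only: nonneg_Reals_of_real_iff) (simp add: sum_nonneg)
qed

lemma gram_charpoly_roots_nonneg:
  fixes A :: "real^'d^'m"
  assumes "poly (map_poly complex_of_real (charpoly (transpose A ** A))) z = 0"
  shows "z \<in> \<real>\<^sub>\<ge>\<^sub>0"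
  using assms unfolding map_poly_of_real_charpoly poly_charpoly by (rule gram_eigenvalue_nonneg)

lemma gram_charpoly_factor:
  fixes A :: "real^'d^'m"
  shows "\<exists>\<alpha>. (\<forall>i. 0 \<le> \<alpha> i) \<and> charpoly (transpose A ** A) = (\<Prod>i<CARD('d). [:- \<alpha> i, 1:])"
  by (rule monic_nonneg_rooted_factor[OF charpoly_monic gram_charpoly_roots_nonneg])

lemma exists_gram_charpoly:
  assumes card: "CARD('d) \<le> CARD('m)" and nonneg: "\<And>i. 0 \<le> \<alpha> i"
  shows "\<exists>C :: real^'d^'m. charpoly (transpose C ** C) = (\<Prod>i<CARD('d). [:- \<alpha> i, 1:])"
proof -
  obtain h :: "'d \<Rightarrow> nat" where h: "bij_betw h UNIV {..<CARD('d)}"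
    using ex_bij_betw_finite_nat[of "UNIV :: 'd set"] by (auto simp: atLeast0LessThan)
  obtain \<iota> :: "'d \<Rightarrow> 'm" where \<iota>: "inj \<iota>"
    using card_le_inj[of "UNIV :: 'd set" "UNIV :: 'm set"] card by auto
  define C :: "real^'d^'m" where "C = (\<chi> r c. if r = \<iota> c then sqrt (\<alpha> (h c)) else 0)"
  have "C$r$a * C$r$b = (if r = \<iota> a then (if a = b then \<alpha> (h a) else 0) else 0)" for r a b
    using \<iota> nonneg by (auto simp: C_def inj_eq)
  hence CTC: "(transpose C ** C)$a$b = (if a = b then \<alpha> (h a) else 0)" for a b
    by (simp add: matrix_matrix_mult_def transpose_def)
  have "poly (charpoly (transpose C ** C)) t = poly (\<Prod>i<CARD('d). [:- \<alpha> i, 1:]) t" for t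
  proof -
    have "poly (charpoly (transpose C ** C)) t = (\<Prod>a\<in>UNIV. t - \<alpha> (h a))"
      unfolding poly_charpoly by (subst det_diagonal) (simp_all add: CTC mat_def)
    also have "\<dots> = (\<Prod>i<CARD('d). t - \<alpha> i)"
      by (rule prod.reindex_bij_betw[OF h])
    finally show ?thesis
      by (simp add: poly_prod)
  qed
  hence "poly (charpoly (transpose C ** C)) = poly (\<Prod>i<CARD('d). [:- \<alpha> i, 1:])" ..
  thus ?thesis
    unfolding poly_eq_poly_eq_iff by blast
qed

section \<open>Biaffine polynomials without zeros in the upper half plane\<close>

lemma upper_half_mult_notin_nonneg_Reals:
  fixes w w' :: complex
  assumes "0 < Im w" "0 < Im w'"
  shows "w * w' \<notin> \<real>\<^sub>\<ge>\<^sub>0"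
proof
  assume "w * w' \<in> \<real>\<^sub>\<ge>\<^sub>0"
  then obtain r where r: "w * w' = of_real r" "0 \<le> r"
    by (auto simp: nonneg_Reals_def)
  have "w \<noteq> 0"
    using assms by auto
  hence "w' = of_real r / w"
    using r(1) by (simp add: field_simps)
  hence "Im w' = - r * Im w / (cmod w)\<^sup>2"
    by (simp add: Im_divide cmod_power2)
  also have "\<dots> \<le> 0"
    using r(2) assms by (simp add: divide_nonpos_nonneg)
  finally show False
    using assms by simp
qed

lemma upper_half_sqrt:
  fixes t :: complex
  assumes "t \<notin> \<real>\<^sub>\<ge>\<^sub>0"
  obtains w where "0 < Im w" "w * w = t"
proof -
  define r where "r = csqrt t"
  have "r * r = t"
    unfolding r_def by (simp flip: power2_eq_square)
  moreover have "Im r \<noteq> 0"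
  proof
    assume "Im r = 0"
    hence "t = of_real ((Re r)\<^sup>2)"
      using \<open>r * r = t\<close> by (auto simp: complex_eq_iff power2_eq_square)
    with assms show False
      by (metis nonneg_Reals_of_real_iff zero_le_power2)
  qed
  ultimately show ?thesis
    using that[of r] that[of "- r"] by (cases "0 < Im r") auto
qed

lemma one_minus_mult_upper_half_nonzero:
  fixes w w' :: complex and \<beta> :: real
  assumes "0 \<le> \<beta>" "0 < Im w \<or> w = 0" "0 < Im w' \<or> w' = 0"
  shows "1 - \<beta> * w * w' \<noteq> 0"
proof
  assume E: "1 - \<beta> * w * w' = 0"
  hence "\<beta> \<noteq> 0" "w \<noteq> 0" "w' \<noteq> 0"
    by auto
  hence "0 < Im w" "0 < Im w'" "0 < \<beta>"
    using assms by auto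
  moreover have "w * w' = of_real (1 / \<beta>)"
    using E \<open>\<beta> \<noteq> 0\<close> by (simp add: field_simps)
  ultimately show False
    using upper_half_mult_notin_nonneg_Reals by (metis nonneg_Reals_of_real_iff less_eq_real_def
        zero_less_divide_1_iff)
qed

lemma Im_neg_inverse_pos: "0 < Im (z :: complex) \<Longrightarrow> 0 < Im (- 1 / z)"
  by (simp add: Im_divide add_nonneg_pos)

lemma upper_half_zero_degenerate:
  fixes a c :: complex
  assumes "a \<noteq> 0"
  obtains s t where "0 < Im s" "0 < Im t" "a + c * t + a * s * t = 0"
proof -
  define h where "h = cmod (c / a) + 1"
  have "0 < h"
    unfolding h_def by (simp add: add_nonneg_pos)
  define s where "s = of_real h * \<i> - c / a"
  define t where "t = \<i> / of_real h"
  have "Im (c / a) \<le> cmod (c / a)"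
    using abs_Im_le_cmod[of "c / a"] by linarith
  hence "0 < Im s"
    unfolding s_def h_def by simp
  moreover have "0 < Im t"
    unfolding t_def using \<open>0 < h\<close> by (simp add: Im_divide)
  moreover have "a + c * t + a * s * t = 0"
    unfolding s_def t_def using \<open>a \<noteq> 0\<close> \<open>0 < h\<close> by (simp add: field_simps)
  ultimately show ?thesis
    using that by blast
qed

text \<open>The roots of \<open>\<sigma>\<^sup>2 - \<i> \<epsilon> \<sigma> - K / b\<close> sum to \<open>\<i> \<epsilon>\<close>, so one of them lies in the
  upper half plane.\<close>

lemma quadratic_upper_half_root:
  fixes b K :: complex and \<epsilon> :: real
  assumes "b \<noteq> 0" "0 < \<epsilon>"
  obtains \<sigma> where "0 < Im \<sigma>" "b * \<sigma>\<^sup>2 - \<i> * b * of_real \<epsilon> * \<sigma> - K = 0"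
proof -
  define R where "R = csqrt (4 * K / b - (of_real \<epsilon>)\<^sup>2)"
  define R' where "R' = (if 0 \<le> Im R then R else - R)"
  define \<sigma> where "\<sigma> = (\<i> * of_real \<epsilon> + R') / 2"
  have "0 < Im \<sigma>"
    unfolding \<sigma>_def R'_def using \<open>0 < \<epsilon>\<close> by auto
  have "2 * \<sigma> - \<i> * of_real \<epsilon> = R'"
    unfolding \<sigma>_def by (simp add: field_simps)
  hence "(2 * \<sigma> - \<i> * of_real \<epsilon>)\<^sup>2 = 4 * K / b - (of_real \<epsilon>)\<^sup>2"
    unfolding R'_def R_def by auto
  hence "b * (2 * \<sigma> - \<i> * of_real \<epsilon>)\<^sup>2 = 4 * K - b * (of_real \<epsilon>)\<^sup>2"
    using \<open>b \<noteq> 0\<close> by (simp add: field_simps)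
  moreover have "b * (2 * \<sigma> - \<i> * of_real \<epsilon>)\<^sup>2
      = 4 * (b * \<sigma>\<^sup>2 - \<i> * b * of_real \<epsilon> * \<sigma>) - b * (of_real \<epsilon>)\<^sup>2"
    by (simp add: power2_eq_square algebra_simps)
  ultimately have "4 * (b * \<sigma>\<^sup>2 - \<i> * b * of_real \<epsilon> * \<sigma> - K) = 0"
    by (simp add: right_diff_distrib)
  hence "b * \<sigma>\<^sup>2 - \<i> * b * of_real \<epsilon> * \<sigma> - K = 0"
    by (metis mult_eq_0_iff zero_neq_numeral)
  with \<open>0 < Im \<sigma>\<close> show ?thesis
    using that by blast
qed

text \<open>For a biaffine \<open>f s t = a + b s + c t + e s t\<close> the polynomial \<open>f - e\<close> is
  \<open>(1 - \<partial>\<^sub>s \<partial>\<^sub>t) f\<close>; this and the next lemma are the two variable case of the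
  Lieb--Sokal lemma.\<close>

lemma biaffine_nonzero_minus_lead:
  fixes a b c e s\<^sub>0 :: complex
  assumes f: "\<And>s t. 0 < Im s \<Longrightarrow> 0 < Im t \<or> t = 0 \<Longrightarrow> a + b * s + c * t + e * s * t \<noteq> 0"
    and s\<^sub>0: "0 < Im s\<^sub>0"
  shows "a - e + b * s\<^sub>0 \<noteq> 0"
proof
  assume Z: "a - e + b * s\<^sub>0 = 0"
  show False
  proof (cases "b = 0")
    case True
    with Z have "a = e"
      by simp
    have "a \<noteq> 0"
      using f[of \<i> 0] True by simp
    then obtain s t where "0 < Im s" "0 < Im t" "a + c * t + a * s * t = 0"
      by (rule upper_half_zero_degenerate)
    thus False
      using f[of s t] True \<open>a = e\<close> by simp
  next
    case False
    \<comment> \<open>Move \<open>s\<^sub>0\<close> down by \<open>\<i> \<epsilon>\<close>, then back up by a root \<open>\<sigma>\<close> paired with \<open>t = -1/\<sigma>\<close>.\<close>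
    define \<epsilon> where "\<epsilon> = Im s\<^sub>0 / 2"
    have "0 < \<epsilon>"
      using s\<^sub>0 unfolding \<epsilon>_def by simp
    define s where "s = s\<^sub>0 - \<i> * of_real \<epsilon>"
    have "0 < Im s"
      unfolding s_def \<epsilon>_def using s\<^sub>0 by simp
    obtain \<sigma> where "0 < Im \<sigma>" and quad: "b * \<sigma>\<^sup>2 - \<i> * b * of_real \<epsilon> * \<sigma> - (c + e * s) = 0"
      using quadratic_upper_half_root[OF False \<open>0 < \<epsilon>\<close>] by blast
    have lin: "a - e + b * s = - \<i> * b * of_real \<epsilon>"
      using Z unfolding s_def by (simp add: algebra_simps)
    have "\<sigma> \<noteq> 0"
      using \<open>0 < Im \<sigma>\<close> by auto
    hence "a + b * (s + \<sigma>) + c * (- 1 / \<sigma>) + e * (s + \<sigma>) * (- 1 / \<sigma>)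
        = ((a - e + b * s) * \<sigma> + b * \<sigma>\<^sup>2 - (c + e * s)) / \<sigma>"
      by (simp add: field_simps power2_eq_square)
    also have "\<dots> = 0"
      unfolding lin using quad by (simp add: algebra_simps)
    finally show False
      using f[of "s + \<sigma>" "- 1 / \<sigma>"] \<open>0 < Im s\<close> \<open>0 < Im \<sigma>\<close> Im_neg_inverse_pos by auto
  qed
qed

lemma biaffine_stable_minus_lead:
  fixes a b c e s t :: complex and \<beta> :: real
  assumes f: "\<And>s t. 0 < Im s \<Longrightarrow> 0 < Im t \<Longrightarrow> a + b * s + c * t + e * s * t \<noteq> 0"
    and "0 \<le> \<beta>" and st: "0 < Im s" "0 < Im t"
  shows "a + b * s + c * t + e * s * t - \<beta> * e \<noteq> 0"
proof -
  \<comment> \<open>First apply the boundary version in the variables \<open>(s, w)\<close> to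
    \<open>f s t * (1 - \<beta> w w')\<close>, then in the variables \<open>(t, w')\<close>.\<close>
  have step: "(a + c * t) + \<beta> * w' * (b + e * t) + (b + e * t) * s \<noteq> 0"
    if t: "0 < Im t" and w': "0 < Im w' \<or> w' = 0" and s: "0 < Im s" for s t w' :: complex
  proof -
    have "(a + c * t) - (- \<beta> * w' * (b + e * t)) + (b + e * t) * s \<noteq> 0"
    proof (rule biaffine_nonzero_minus_lead[OF _ s])
      fix s w :: complex
      assume s: "0 < Im s" and w: "0 < Im w \<or> w = 0"
      have "(a + b * s + c * t + e * s * t) * (1 - \<beta> * w * w') \<noteq> 0"
        using f[OF s t] one_minus_mult_upper_half_nonzero[OF \<open>0 \<le> \<beta>\<close> w w'] by simp
      thus "a + c * t + (b + e * t) * s + - \<beta> * w' * (a + c * t) * w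
          + - \<beta> * w' * (b + e * t) * s * w \<noteq> 0"
        by (simp add: algebra_simps)
    qed
    thus ?thesis
      by simp
  qed
  have "(a + b * s) - \<beta> * e + (c + e * s) * t \<noteq> 0"
  proof (rule biaffine_nonzero_minus_lead[OF _ st(2)])
    fix t w' :: complex
    assume "0 < Im t" "0 < Im w' \<or> w' = 0"
    from step[OF this st(1)]
    show "a + b * s + (c + e * s) * t + \<beta> * b * w' + \<beta> * e * t * w' \<noteq> 0"
      by (simp add: algebra_simps)
  qed
  thus ?thesis
    by (simp add: algebra_simps)
qed

section \<open>Polar derivatives and the Grace--Walsh--Szego theorem\<close>

lemma poly_pderiv_prod_linear:
  fixes \<rho> :: "nat \<Rightarrow> 'a::field"
  assumes "\<And>i. i < D \<Longrightarrow> t \<noteq> \<rho> i"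
  shows "poly (pderiv (\<Prod>i<D. [:- \<rho> i, 1:])) t
       = poly (\<Prod>i<D. [:- \<rho> i, 1:]) t * (\<Sum>i<D. 1 / (t - \<rho> i))"
  using assms
proof (induction D)
  case (Suc D)
  have IH: "poly (pderiv (\<Prod>i<D. [:- \<rho> i, 1:])) t
      = poly (\<Prod>i<D. [:- \<rho> i, 1:]) t * (\<Sum>i<D. 1 / (t - \<rho> i))"
    using Suc by simp
  have ne: "t - \<rho> D \<noteq> 0"
    using Suc.prems by simp
  have "pderiv [:- \<rho> D, 1:] = 1"
    by (simp add: pderiv_pCons)
  hence "pderiv (\<Prod>i<Suc D. [:- \<rho> i, 1:])
      = (\<Prod>i<D. [:- \<rho> i, 1:]) + [:- \<rho> D, 1:] * pderiv (\<Prod>i<D. [:- \<rho> i, 1:])"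
    by (simp only: prod.lessThan_Suc pderiv_mult mult_1_right)
  hence "poly (pderiv (\<Prod>i<Suc D. [:- \<rho> i, 1:])) t
      = poly (pderiv (\<Prod>i<D. [:- \<rho> i, 1:])) t * (t - \<rho> D) + poly (\<Prod>i<D. [:- \<rho> i, 1:]) t"
    by (simp only: poly_add poly_mult) (simp add: algebra_simps)
  also have "\<dots> = poly (\<Prod>i<D. [:- \<rho> i, 1:]) t * (t - \<rho> D) * ((\<Sum>i<D. 1 / (t - \<rho> i)) + 1 / (t - \<rho> D))"
    unfolding IH using ne by (simp add: field_simps)
  finally show ?case
    by (simp add: algebra_simps)
qed simp

lemma Im_inverse_diff:
  fixes t \<zeta> :: complex
  assumes "t \<noteq> \<zeta>"
  shows "Im t * (cmod (1 / (t - \<zeta>)))\<^sup>2 + Im (1 / (t - \<zeta>)) = Im \<zeta> / (cmod (t - \<zeta>))\<^sup>2"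
proof -
  define v where "v = t - \<zeta>"
  have "0 < (cmod v)\<^sup>2"
    using assms unfolding v_def by simp
  moreover have "(cmod (1 / v))\<^sup>2 = 1 / (cmod v)\<^sup>2" "Im (1 / v) = - Im v / (cmod v)\<^sup>2"
    by (simp_all add: norm_divide power_divide Im_divide cmod_power2)
  ultimately have "Im t * (cmod (1 / v))\<^sup>2 + Im (1 / v) = (Im t - Im v) / (cmod v)\<^sup>2"
    by (simp add: field_simps)
  thus ?thesis
    unfolding v_def by simp
qed

lemma Im_sum_inverse_diff_bound:
  fixes t :: complex and \<rho> :: "nat \<Rightarrow> complex"
  assumes t: "0 < Im t" and roots: "\<And>i. i < D \<Longrightarrow> Im (\<rho> i) \<le> 0" and "D \<le> N"
  defines "U \<equiv> (\<Sum>i<D. 1 / (t - \<rho> i))"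
  shows "Im t * (cmod U)\<^sup>2 + of_nat N * Im U \<le> 0"
proof -
  define u where "u i = 1 / (t - \<rho> i)" for i
  have ne: "t \<noteq> \<rho> i" if "i < D" for i
    using roots[OF that] t by auto
  have u: "Im t * (cmod (u i))\<^sup>2 \<le> - Im (u i)" if "i < D" for i
  proof -
    have "Im t * (cmod (u i))\<^sup>2 + Im (u i) = Im (\<rho> i) / (cmod (t - \<rho> i))\<^sup>2"
      unfolding u_def using ne[OF that] by (rule Im_inverse_diff)
    also have "\<dots> \<le> 0"
      using roots[OF that] by (simp add: divide_nonpos_nonneg)
    finally show ?thesis
      by simp
  qed
  have "Im (u i) \<le> 0" if "i < D" for i
    using u[OF that] t by (smt (verit) mult_nonneg_nonneg zero_le_power2)
  hence Im_U: "Im U \<le> 0"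
    unfolding U_def u_def[symmetric] by (auto intro!: sum_nonpos)
  have "(cmod U)\<^sup>2 \<le> (\<Sum>i<D. cmod (u i))\<^sup>2"
    unfolding U_def u_def[symmetric] by (simp add: norm_sum power_mono)
  also have "\<dots> \<le> of_nat D * (\<Sum>i<D. (cmod (u i))\<^sup>2)"
    using sum_squared_le_sum_of_squares[of "\<lambda>i. cmod (u i)" "{..<D}"] by (simp add: mult.commute)
  finally have "Im t * (cmod U)\<^sup>2 \<le> Im t * (of_nat D * (\<Sum>i<D. (cmod (u i))\<^sup>2))"
    using t by (intro mult_left_mono) auto
  also have "\<dots> = of_nat D * (\<Sum>i<D. Im t * (cmod (u i))\<^sup>2)"
    by (simp add: sum_distrib_left mult.left_commute)
  also have "\<dots> \<le> of_nat D * (\<Sum>i<D. - Im (u i))"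
    using u by (intro mult_left_mono sum_mono) auto
  also have "\<dots> = - of_nat D * Im U"
    unfolding U_def u_def by (simp add: sum_negf)
  also have "\<dots> \<le> - of_nat N * Im U"
    using Im_U \<open>D \<le> N\<close> by (simp add: mult_right_mono_neg)
  finally show ?thesis
    by simp
qed

lemma upper_half_stable_factor:
  fixes p :: "complex poly"
  assumes stable: "\<And>z. 0 < Im z \<Longrightarrow> poly p z \<noteq> 0"
  obtains lc \<rho> where "lc \<noteq> 0" "p = smult lc (\<Prod>i<degree p. [:- \<rho> i, 1:])"
    "\<And>i. i < degree p \<Longrightarrow> Im (\<rho> i) \<le> 0"
proof -
  have "p \<noteq> 0"
    using stable[of \<i>] by auto
  obtain \<rho> :: "nat \<Rightarrow> complex" where p: "smult (lead_coeff p) (\<Prod>i<degree p. [:- \<rho> i, 1:]) = p"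
    using complex_poly_decompose' by blast
  have "Im (\<rho> i) \<le> 0" if "i < degree p" for i
  proof (rule ccontr)
    assume "\<not> Im (\<rho> i) \<le> 0"
    hence "poly p (\<rho> i) \<noteq> 0"
      using stable by simp
    moreover have "poly (\<Prod>i<degree p. [:- \<rho> i, 1:]) (\<rho> i) = 0"
      using that by (auto simp: poly_prod)
    ultimately show False
      by (metis p poly_smult mult_zero_right)
  qed
  with \<open>p \<noteq> 0\<close> p show ?thesis
    using that[of "lead_coeff p" \<rho>] by simp
qed

text \<open>Laguerre's theorem on polar derivatives.\<close>

lemma stable_polar_derivative:
  fixes p :: "complex poly" and w t :: complex
  assumes deg: "degree p \<le> N" and "1 \<le> N"
    and stable: "\<And>z. 0 < Im z \<Longrightarrow> poly p z \<noteq> 0"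
    and w: "0 < Im w" and t: "0 < Im t"
  shows "of_nat N * poly p t + (w - t) * poly (pderiv p) t \<noteq> 0"
proof
  assume E: "of_nat N * poly p t + (w - t) * poly (pderiv p) t = 0"
  obtain lc \<rho> where "lc \<noteq> 0" and p_eq: "p = smult lc (\<Prod>i<degree p. [:- \<rho> i, 1:])"
    and roots: "\<And>i. i < degree p \<Longrightarrow> Im (\<rho> i) \<le> 0"
    using upper_half_stable_factor[OF stable] by blast
  define Q where "Q = (\<Prod>i<degree p. [:- \<rho> i, 1:])"
  have pQ: "p = smult lc Q"
    using p_eq unfolding Q_def .
  have "poly Q t \<noteq> 0"
    using stable[OF t] unfolding pQ by simp
  define U where "U = (\<Sum>i<degree p. 1 / (t - \<rho> i))"
  have "poly (pderiv Q) t = poly Q t * U"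
    unfolding Q_def U_def using roots t by (intro poly_pderiv_prod_linear) force
  hence "lc * poly Q t * (of_nat N + (w - t) * U) = 0"
    using E unfolding pQ by (simp add: pderiv_smult algebra_simps)
  hence E': "of_nat N + (w - t) * U = 0"
    using \<open>lc \<noteq> 0\<close> \<open>poly Q t \<noteq> 0\<close> by simp
  hence "w \<noteq> t"
    using \<open>1 \<le> N\<close> by auto
  define v where "v = 1 / (t - w)"
  have "U = of_nat N * v"
    using E' \<open>w \<noteq> t\<close> unfolding v_def by (simp add: field_simps)
  moreover have "Im t * (cmod U)\<^sup>2 + of_nat N * Im U \<le> 0"
    unfolding U_def using t roots deg by (intro Im_sum_inverse_diff_bound) auto
  ultimately have "(of_nat N)\<^sup>2 * (Im t * (cmod v)\<^sup>2 + Im v) \<le> 0"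
    by (simp add: norm_mult algebra_simps power2_eq_square)
  hence "Im t * (cmod v)\<^sup>2 + Im v \<le> 0"
    using \<open>1 \<le> N\<close> by (simp add: mult_le_0_iff)
  hence "Im w / (cmod (t - w))\<^sup>2 \<le> 0"
    unfolding v_def using Im_inverse_diff[of t w] \<open>w \<noteq> t\<close> by simp
  moreover have "0 < (cmod (t - w))\<^sup>2"
    using \<open>w \<noteq> t\<close> by simp
  ultimately show False
    using w by (simp add: divide_le_0_iff)
qed

definition binomial_poly :: "nat \<Rightarrow> (nat \<Rightarrow> 'a::comm_semiring_1) \<Rightarrow> 'a poly" where
  "binomial_poly n c = (\<Sum>k\<le>n. monom (of_nat (n choose k) * c k) k)"

lemma coeff_binomial_poly: "coeff (binomial_poly n c) k = of_nat (n choose k) * c k"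
  by (cases "k \<le> n") (simp_all add: binomial_poly_def coeff_sum binomial_eq_0)

lemma poly_binomial_poly: "poly (binomial_poly n c) t = (\<Sum>k\<le>n. of_nat (n choose k) * c k * t ^ k)"
  by (simp add: binomial_poly_def poly_sum poly_monom)

lemma degree_binomial_poly: "degree (binomial_poly n c) \<le> n"
  unfolding binomial_poly_def by (intro degree_sum_le) (auto intro: order_trans[OF degree_monom_le])

lemma pderiv_binomial_poly:
  "pderiv (binomial_poly (Suc n) c) = smult (of_nat (Suc n)) (binomial_poly n (\<lambda>k. c (Suc k)))"
proof (rule poly_eqI)
  fix k
  show "coeff (pderiv (binomial_poly (Suc n) c)) k = coeff (smult (of_nat (Suc n)) (binomial_poly n (\<lambda>k. c (Suc k)))) k"
    unfolding coeff_pderiv coeff_smult coeff_binomial_poly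
    by (simp only: mult.assoc[symmetric] of_nat_mult[symmetric] Suc_times_binomial)
qed

lemma binomial_poly_euler:
  fixes c :: "nat \<Rightarrow> 'a::idom"
  shows "smult (of_nat (Suc n)) (binomial_poly (Suc n) c) - pCons 0 (pderiv (binomial_poly (Suc n) c))
       = smult (of_nat (Suc n)) (binomial_poly n c)"
proof (rule poly_eqI)
  fix k
  have lhs: "coeff (smult (of_nat (Suc n)) (binomial_poly (Suc n) c) - pCons 0 (pderiv (binomial_poly (Suc n) c))) k
      = (of_nat (Suc n) - of_nat k) * of_nat (Suc n choose k) * c k"
    by (cases k) (simp_all add: coeff_pderiv coeff_binomial_poly algebra_simps)
  have "(of_nat (Suc n) - of_nat k) * of_nat (Suc n choose k) = (of_nat (Suc n) * of_nat (n choose k) :: 'a)"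
  proof (cases "k \<le> Suc n")
    case True
    have "(of_nat (Suc n - k) :: 'a) * of_nat (Suc n choose k) = of_nat (Suc n) * of_nat (n choose k)"
      by (metis binomial_absorb_comp diff_Suc_1 of_nat_mult)
    thus ?thesis
      unfolding of_nat_diff[OF True] .
  qed (simp add: binomial_eq_0)
  thus "coeff (smult (of_nat (Suc n)) (binomial_poly (Suc n) c) - pCons 0 (pderiv (binomial_poly (Suc n) c))) k
      = coeff (smult (of_nat (Suc n)) (binomial_poly n c)) k"
    unfolding lhs coeff_smult coeff_binomial_poly by (simp only: mult.assoc[symmetric])
qed

lemma polar_derivative_binomial_poly:
  fixes c :: "nat \<Rightarrow> 'a::idom"
  shows "of_nat (Suc n) * poly (binomial_poly (Suc n) c) t + (w - t) * poly (pderiv (binomial_poly (Suc n) c)) t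
       = of_nat (Suc n) * poly (binomial_poly n (\<lambda>k. c k + w * c (Suc k))) t"
proof -
  have "binomial_poly n (\<lambda>k. c k + w * c (Suc k)) = binomial_poly n c + smult w (binomial_poly n (\<lambda>k. c (Suc k)))"
    by (rule poly_eqI) (simp add: coeff_binomial_poly algebra_simps)
  moreover have "of_nat (Suc n) * poly (binomial_poly (Suc n) c) t - t * poly (pderiv (binomial_poly (Suc n) c)) t
      = of_nat (Suc n) * poly (binomial_poly n c) t"
    using arg_cong[OF binomial_poly_euler[of n c], of "\<lambda>p. poly p t"] by simp
  ultimately show ?thesis
    by (simp add: pderiv_binomial_poly algebra_simps)
qed

lemma sum_Pow_insert:
  assumes "finite A" "a \<notin> A"
  shows "(\<Sum>S\<in>Pow (insert a A). g S) = (\<Sum>S\<in>Pow A. g S + g (insert a S))"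
proof -
  have "inj_on (insert a) (Pow A)" "Pow A \<inter> insert a ` Pow A = {}"
    using assms(2) by (auto simp: inj_on_def)
  thus ?thesis
    unfolding Pow_insert using assms(1) by (simp add: sum.union_disjoint sum.reindex sum.distrib)
qed

theorem grace_walsh_szego:
  fixes c z :: "nat \<Rightarrow> complex"
  assumes "\<And>t. 0 < Im t \<Longrightarrow> poly (binomial_poly n c) t \<noteq> 0"
    and "\<And>i. i < n \<Longrightarrow> 0 < Im (z i)"
  shows "(\<Sum>S\<in>Pow {..<n}. c (card S) * prod z S) \<noteq> 0"
  using assms
proof (induction n arbitrary: c)
  case 0
  thus ?case
    using "0.prems"(1)[of \<i>] by (simp add: poly_binomial_poly)
next
  case (Suc n)
  \<comment> \<open>Specializing the last variable to \<open>z n\<close> is a polar derivative with pole \<open>z n\<close>.\<close>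
  define c' where "c' k = c k + z n * c (Suc k)" for k
  have "(\<Sum>S\<in>Pow {..<Suc n}. c (card S) * prod z S) = (\<Sum>S\<in>Pow {..<n}. c' (card S) * prod z S)"
    unfolding lessThan_Suc
  proof (subst sum_Pow_insert, simp_all, intro sum.cong refl)
    fix S
    assume "S \<in> Pow {..<n}"
    hence "finite S" "n \<notin> S"
      by (auto intro: finite_subset)
    thus "c (card S) * prod z S + c (card (insert n S)) * prod z (insert n S) = c' (card S) * prod z S"
      by (simp add: c'_def algebra_simps)
  qed
  moreover have "poly (binomial_poly n c') t \<noteq> 0" if "0 < Im t" for t
  proof -
    have "of_nat (Suc n) * poly (binomial_poly (Suc n) c) t
        + (z n - t) * poly (pderiv (binomial_poly (Suc n) c)) t \<noteq> 0"
      using Suc.prems that by (intro stable_polar_derivative degree_binomial_poly) auto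
    thus ?thesis
      unfolding polar_derivative_binomial_poly c'_def by simp
  qed
  ultimately show ?case
    using Suc.IH[of c'] Suc.prems(2) by simp
qed

corollary grace_walsh_szego_bivariate:
  fixes c :: "nat \<Rightarrow> nat \<Rightarrow> complex" and x y :: "nat \<Rightarrow> complex"
  assumes diag: "\<And>s t. 0 < Im s \<Longrightarrow> 0 < Im t \<Longrightarrow>
      (\<Sum>a\<le>d. \<Sum>b\<le>m. of_nat (d choose a) * of_nat (m choose b) * c a b * s ^ a * t ^ b) \<noteq> 0"
    and x: "\<And>i. i < d \<Longrightarrow> 0 < Im (x i)" and y: "\<And>j. j < m \<Longrightarrow> 0 < Im (y j)"
  shows "(\<Sum>S\<in>Pow {..<d}. \<Sum>R\<in>Pow {..<m}. c (card S) (card R) * prod x S * prod y R) \<noteq> 0"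
proof -
  define c1 where "c1 a = (\<Sum>R\<in>Pow {..<m}. c a (card R) * prod y R)" for a
  have "poly (binomial_poly d c1) s \<noteq> 0" if s: "0 < Im s" for s
  proof -
    define c2 where "c2 b = (\<Sum>a\<le>d. of_nat (d choose a) * c a b * s ^ a)" for b
    have "poly (binomial_poly m c2) t \<noteq> 0" if "0 < Im t" for t
      using diag[OF s that] unfolding c2_def poly_binomial_poly
      by (simp add: sum_distrib_left sum_distrib_right algebra_simps sum.swap[of _ "{..m}"])
    hence "(\<Sum>R\<in>Pow {..<m}. c2 (card R) * prod y R) \<noteq> 0"
      using y by (rule grace_walsh_szego)
    thus ?thesis
      unfolding c1_def c2_def poly_binomial_poly
      by (simp add: sum_distrib_left sum_distrib_right algebra_simps sum.swap[of _ "{..d}"])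
  qed
  hence "(\<Sum>S\<in>Pow {..<d}. c1 (card S) * prod x S) \<noteq> 0"
    using x by (rule grace_walsh_szego)
  thus ?thesis
    unfolding c1_def by (simp add: sum_distrib_left sum_distrib_right mult_ac)
qed

section \<open>Multiaffine polynomials and mixed derivatives\<close>

definition multiaffine ::
    "nat \<Rightarrow> nat \<Rightarrow> (nat set \<Rightarrow> nat set \<Rightarrow> complex) \<Rightarrow> (nat \<Rightarrow> complex) \<Rightarrow> (nat \<Rightarrow> complex) \<Rightarrow> complex"
  where "multiaffine d m \<kappa> x y = (\<Sum>S\<in>Pow {..<d}. \<Sum>R\<in>Pow {..<m}. \<kappa> S R * prod x S * prod y R)"

definition stable_multiaffine :: "nat \<Rightarrow> nat \<Rightarrow> (nat set \<Rightarrow> nat set \<Rightarrow> complex) \<Rightarrow> bool" where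
  "stable_multiaffine d m \<kappa> \<longleftrightarrow>
     (\<forall>x y. (\<forall>i<d. 0 < Im (x i)) \<longrightarrow> (\<forall>j<m. 0 < Im (y j)) \<longrightarrow> multiaffine d m \<kappa> x y \<noteq> 0)"

text \<open>For \<open>U, V \<subseteq> {l}\<close>, \<open>pair_coeff l U V \<kappa>\<close> is the coefficient of
  \<open>x\<^sub>l\<^bsup>|U|\<^esup> y\<^sub>l\<^bsup>|V|\<^esup>\<close> when \<open>multiaffine d m \<kappa> x y\<close> is
  regarded as a polynomial in \<open>x\<^sub>l\<close> and \<open>y\<^sub>l\<close>.\<close>

definition pair_coeff ::
    "nat \<Rightarrow> nat set \<Rightarrow> nat set \<Rightarrow> (nat set \<Rightarrow> nat set \<Rightarrow> complex) \<Rightarrow> nat set \<Rightarrow> nat set \<Rightarrow> complex"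
  where "pair_coeff l U V \<kappa> S R = (if l \<in> S \<or> l \<in> R then 0 else \<kappa> (U \<union> S) (V \<union> R))"

lemma sum_Pow_remove:
  assumes "finite A" "a \<in> A"
  shows "(\<Sum>S\<in>Pow A. g S) = (\<Sum>S\<in>Pow (A - {a}). g S + g (insert a S))"
  using sum_Pow_insert[of "A - {a}" a g] assms by (simp add: insert_absorb)

lemma sum_Pow_Pow_remove:
  fixes l d m :: nat and G :: "nat set \<Rightarrow> nat set \<Rightarrow> 'a::comm_monoid_add"
  assumes "l < d" "l < m"
  shows "(\<Sum>S\<in>Pow {..<d}. \<Sum>R\<in>Pow {..<m}. G S R)
       = (\<Sum>S\<in>Pow ({..<d} - {l}). \<Sum>R\<in>Pow ({..<m} - {l}).
            G S R + G (insert l S) R + G S (insert l R) + G (insert l S) (insert l R))"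
proof -
  have "(\<Sum>S\<in>Pow {..<d}. \<Sum>R\<in>Pow {..<m}. G S R)
      = (\<Sum>S\<in>Pow ({..<d} - {l}). (\<Sum>R\<in>Pow {..<m}. G S R) + (\<Sum>R\<in>Pow {..<m}. G (insert l S) R))"
    using assms by (subst sum_Pow_remove[of "{..<d}" l]) auto
  also have "\<dots> = (\<Sum>S\<in>Pow ({..<d} - {l}). \<Sum>R\<in>Pow ({..<m} - {l}).
            G S R + G (insert l S) R + G S (insert l R) + G (insert l S) (insert l R))"
    using assms by (simp add: sum_Pow_remove[of "{..<m}" l] sum.distrib[symmetric] algebra_simps)
  finally show ?thesis .
qed

lemma multiaffine_avoiding:
  assumes "l < d" "l < m" and avoid: "\<And>S R. l \<in> S \<or> l \<in> R \<Longrightarrow> \<kappa> S R = 0"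
  shows "multiaffine d m \<kappa> x y
       = (\<Sum>S\<in>Pow ({..<d} - {l}). \<Sum>R\<in>Pow ({..<m} - {l}). \<kappa> S R * prod x S * prod y R)"
  unfolding multiaffine_def by (subst sum_Pow_Pow_remove[OF assms(1,2)]) (simp add: avoid)

lemma multiaffine_update_pair:
  assumes l: "l < d" "l < m"
  shows "multiaffine d m \<kappa> (x(l := s)) (y(l := t))
       = multiaffine d m (pair_coeff l {} {} \<kappa>) x y + s * multiaffine d m (pair_coeff l {l} {} \<kappa>) x y
         + t * multiaffine d m (pair_coeff l {} {l} \<kappa>) x y
         + s * t * multiaffine d m (pair_coeff l {l} {l} \<kappa>) x y"
proof -
  let ?A = "Pow ({..<d} - {l})" and ?B = "Pow ({..<m} - {l})"
  have pair: "multiaffine d m (pair_coeff l U V \<kappa>) x y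
      = (\<Sum>S\<in>?A. \<Sum>R\<in>?B. \<kappa> (U \<union> S) (V \<union> R) * prod x S * prod y R)" for U V
    by (subst multiaffine_avoiding[OF l]) (auto simp: pair_coeff_def intro!: sum.cong)
  have "multiaffine d m \<kappa> (x(l := s)) (y(l := t)) = (\<Sum>S\<in>?A. \<Sum>R\<in>?B.
         \<kappa> S R * prod x S * prod y R + s * (\<kappa> (insert l S) R * prod x S * prod y R)
       + t * (\<kappa> S (insert l R) * prod x S * prod y R)
       + s * t * (\<kappa> (insert l S) (insert l R) * prod x S * prod y R))"
    unfolding multiaffine_def sum_Pow_Pow_remove[OF l]
  proof (intro sum.cong refl)
    fix S R
    assume "S \<in> ?A" "R \<in> ?B"
    hence "finite S" "l \<notin> S" "finite R" "l \<notin> R"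
      by (auto intro: finite_subset)
    moreover have upd: "prod (z(l := a)) T = prod z T" if "l \<notin> T" for z :: "nat \<Rightarrow> complex" and a T
      using that by (intro prod.cong) auto
    ultimately have "prod (x(l := s)) S = prod x S" "prod (y(l := t)) R = prod y R"
      "prod (x(l := s)) (insert l S) = s * prod x S" "prod (y(l := t)) (insert l R) = t * prod y R"
      by simp_all
    thus "\<kappa> S R * prod (x(l := s)) S * prod (y(l := t)) R
        + \<kappa> (insert l S) R * prod (x(l := s)) (insert l S) * prod (y(l := t)) R
        + \<kappa> S (insert l R) * prod (x(l := s)) S * prod (y(l := t)) (insert l R)
        + \<kappa> (insert l S) (insert l R) * prod (x(l := s)) (insert l S) * prod (y(l := t)) (insert l R)
      = \<kappa> S R * prod x S * prod y R + s * (\<kappa> (insert l S) R * prod x S * prod y R)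
        + t * (\<kappa> S (insert l R) * prod x S * prod y R)
        + s * t * (\<kappa> (insert l S) (insert l R) * prod x S * prod y R)"
      by (simp add: algebra_simps)
  qed
  also have "\<dots> = multiaffine d m (pair_coeff l {} {} \<kappa>) x y + s * multiaffine d m (pair_coeff l {l} {} \<kappa>) x y
         + t * multiaffine d m (pair_coeff l {} {l} \<kappa>) x y
         + s * t * multiaffine d m (pair_coeff l {l} {l} \<kappa>) x y"
    unfolding pair by (simp add: sum.distrib sum_distrib_left)
  finally show ?thesis .
qed

text \<open>\<open>mixed_op l \<beta> \<kappa>\<close> holds the coefficients of
  \<open>(1 - \<beta> \<partial>/\<partial>x\<^sub>l \<partial>/\<partial>y\<^sub>l) f\<close> for \<open>f = multiaffine d m \<kappa>\<close>.\<close>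

definition mixed_op ::
    "nat \<Rightarrow> real \<Rightarrow> (nat set \<Rightarrow> nat set \<Rightarrow> complex) \<Rightarrow> nat set \<Rightarrow> nat set \<Rightarrow> complex"
  where "mixed_op l \<beta> \<kappa> S R = \<kappa> S R - \<beta> * pair_coeff l {l} {l} \<kappa> S R"

fun mixed_ops ::
    "(nat set \<Rightarrow> nat set \<Rightarrow> complex) \<Rightarrow> (nat \<Rightarrow> real) \<Rightarrow> nat \<Rightarrow> nat set \<Rightarrow> nat set \<Rightarrow> complex"
  where
    "mixed_ops \<kappa> \<beta> 0 = \<kappa>"
  | "mixed_ops \<kappa> \<beta> (Suc k) = mixed_op k (\<beta> k) (mixed_ops \<kappa> \<beta> k)"

lemma stable_mixed_op:
  assumes stable: "stable_multiaffine d m \<kappa>" and l: "l < d" "l < m" and "0 \<le> \<beta>"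
  shows "stable_multiaffine d m (mixed_op l \<beta> \<kappa>)"
  unfolding stable_multiaffine_def
proof (intro allI impI)
  fix x y :: "nat \<Rightarrow> complex"
  assume x: "\<forall>i<d. 0 < Im (x i)" and y: "\<forall>j<m. 0 < Im (y j)"
  define a b c e where "a = multiaffine d m (pair_coeff l {} {} \<kappa>) x y"
    and "b = multiaffine d m (pair_coeff l {l} {} \<kappa>) x y"
    and "c = multiaffine d m (pair_coeff l {} {l} \<kappa>) x y"
    and "e = multiaffine d m (pair_coeff l {l} {l} \<kappa>) x y"
  have f: "a + b * s + c * t + e * s * t \<noteq> 0" if "0 < Im s" "0 < Im t" for s t
  proof -
    have "multiaffine d m \<kappa> (x(l := s)) (y(l := t)) \<noteq> 0"
      using stable x y that unfolding stable_multiaffine_def by simp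
    thus ?thesis
      unfolding multiaffine_update_pair[OF l] a_def b_def c_def e_def by (simp add: algebra_simps)
  qed
  have "multiaffine d m \<kappa> x y = a + b * x l + c * y l + e * x l * y l"
    using multiaffine_update_pair[OF l, of \<kappa> x "x l" y "y l"]
    unfolding a_def b_def c_def e_def by (simp add: algebra_simps)
  moreover have "multiaffine d m (mixed_op l \<beta> \<kappa>) x y = multiaffine d m \<kappa> x y - \<beta> * e"
    unfolding mixed_op_def multiaffine_def e_def
    by (simp add: sum_subtractf sum_distrib_left algebra_simps)
  ultimately show "multiaffine d m (mixed_op l \<beta> \<kappa>) x y \<noteq> 0"
    using biaffine_stable_minus_lead[OF f \<open>0 \<le> \<beta>\<close>] x y l by simp
qed

lemma stable_mixed_ops:
  assumes "stable_multiaffine d m \<kappa>" "d \<le> m" "\<And>l. 0 \<le> \<beta> l" "k \<le> d"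
  shows "stable_multiaffine d m (mixed_ops \<kappa> \<beta> k)"
  using assms(4) by (induction k) (use assms in \<open>simp_all add: stable_mixed_op\<close>)

lemma mixed_ops_eq:
  "mixed_ops \<kappa> \<beta> k S R = (\<Sum>L\<in>Pow {..<k}. if L \<inter> S = {} \<and> L \<inter> R = {}
      then of_real (\<Prod>l\<in>L. - \<beta> l) * \<kappa> (S \<union> L) (R \<union> L) else 0)"
proof (induction k arbitrary: S R)
  case (Suc k)
  have "(\<Sum>L\<in>Pow {..<Suc k}. if L \<inter> S = {} \<and> L \<inter> R = {}
          then of_real (\<Prod>l\<in>L. - \<beta> l) * \<kappa> (S \<union> L) (R \<union> L) else 0)
      = mixed_ops \<kappa> \<beta> k S R
        + (\<Sum>L\<in>Pow {..<k}. if insert k L \<inter> S = {} \<and> insert k L \<inter> R = {}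
          then of_real (\<Prod>l\<in>insert k L. - \<beta> l) * \<kappa> (S \<union> insert k L) (R \<union> insert k L) else 0)"
    unfolding lessThan_Suc Suc.IH by (subst sum_Pow_insert) (auto simp: sum.distrib)
  also have "(\<Sum>L\<in>Pow {..<k}. if insert k L \<inter> S = {} \<and> insert k L \<inter> R = {}
          then of_real (\<Prod>l\<in>insert k L. - \<beta> l) * \<kappa> (S \<union> insert k L) (R \<union> insert k L) else 0)
      = - of_real (\<beta> k) * pair_coeff k {k} {k} (mixed_ops \<kappa> \<beta> k) S R"
  proof (cases "k \<in> S \<or> k \<in> R")
    case False
    hence pc: "pair_coeff k {k} {k} (mixed_ops \<kappa> \<beta> k) S R
        = (\<Sum>L\<in>Pow {..<k}. if L \<inter> insert k S = {} \<and> L \<inter> insert k R = {}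
            then of_real (\<Prod>l\<in>L. - \<beta> l) * \<kappa> (insert k S \<union> L) (insert k R \<union> L) else 0)"
      by (simp add: pair_coeff_def Suc.IH)
    show ?thesis
      unfolding pc sum_distrib_left
    proof (intro sum.cong refl)
      fix L
      assume "L \<in> Pow {..<k}"
      hence "finite L" "k \<notin> L"
        by (auto intro: finite_subset)
      thus "(if insert k L \<inter> S = {} \<and> insert k L \<inter> R = {}
            then of_real (\<Prod>l\<in>insert k L. - \<beta> l) * \<kappa> (S \<union> insert k L) (R \<union> insert k L) else 0)
          = - of_real (\<beta> k) * (if L \<inter> insert k S = {} \<and> L \<inter> insert k R = {}
            then of_real (\<Prod>l\<in>L. - \<beta> l) * \<kappa> (insert k S \<union> L) (insert k R \<union> L) else 0)"
        using False by auto
    qed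
  qed (auto simp: pair_coeff_def)
  finally show ?case
    by (simp add: mixed_op_def)
qed simp

lemma sum_Pow_card:
  fixes f :: "nat \<Rightarrow> 'a::comm_semiring_1"
  assumes "finite A"
  shows "(\<Sum>S\<in>Pow A. f (card S)) = (\<Sum>a\<le>card A. of_nat (card A choose a) * f a)"
proof -
  have "(\<Sum>S\<in>Pow A. f (card S)) = (\<Sum>a\<le>card A. \<Sum>S | S \<subseteq> A \<and> card S = a. f (card S))"
    using assms by (subst sum.group[symmetric, of _ _ card]) (auto intro: card_mono intro!: sum.cong)
  also have "\<dots> = (\<Sum>a\<le>card A. of_nat (card A choose a) * f a)"
    using n_subsets[OF assms] by simp
  finally show ?thesis .
qed

lemma sum_Pow_disjoint:
  assumes "finite A"
  shows "(\<Sum>S\<in>Pow A. if L \<inter> S = {} then h S else 0) = (\<Sum>S\<in>Pow (A - L). h S)"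
proof -
  have "(\<Sum>S\<in>Pow A. if L \<inter> S = {} then h S else 0) = (\<Sum>S\<in>{S\<in>Pow A. L \<inter> S = {}}. h S)"
    by (rule sum.inter_filter[symmetric]) (use assms in simp)
  also have "{S\<in>Pow A. L \<inter> S = {}} = Pow (A - L)"
    by auto
  finally show ?thesis .
qed

lemma multiaffine_diagonal:
  "multiaffine d m \<kappa> (\<lambda>_. x) (\<lambda>_. y)
     = (\<Sum>S\<in>Pow {..<d}. \<Sum>R\<in>Pow {..<m}. \<kappa> S R * x ^ card S * y ^ card R)"
  unfolding multiaffine_def by simp

lemma sum_Pow_Pow_avoiding:
  fixes cc :: "nat \<Rightarrow> nat \<Rightarrow> complex"
  assumes "L \<subseteq> {..<d}" "d \<le> m"
  shows "(\<Sum>S\<in>Pow {..<d}. \<Sum>R\<in>Pow {..<m}. if L \<inter> S = {} \<and> L \<inter> R = {}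
            then cc (card S + card L) (card R + card L) * x ^ card S * y ^ card R else 0)
       = (\<Sum>a\<le>d - card L. of_nat (d - card L choose a) * x ^ a *
            (\<Sum>b\<le>m - card L. of_nat (m - card L choose b) * cc (a + card L) (b + card L) * y ^ b))"
proof -
  have "finite L" "L \<subseteq> {..<m}"
    using assms by (auto intro: finite_subset)
  hence card_d: "card ({..<d} - L) = d - card L" and card_m: "card ({..<m} - L) = m - card L"
    using assms by (simp_all add: card_Diff_subset)
  have "(\<Sum>S\<in>Pow {..<d}. \<Sum>R\<in>Pow {..<m}. if L \<inter> S = {} \<and> L \<inter> R = {}
          then cc (card S + card L) (card R + card L) * x ^ card S * y ^ card R else 0)
      = (\<Sum>S\<in>Pow {..<d}. if L \<inter> S = {} then (\<Sum>R\<in>Pow {..<m}. if L \<inter> R = {} then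
          x ^ card S * (cc (card S + card L) (card R + card L) * y ^ card R) else 0) else 0)"
    by (intro sum.cong refl) (simp add: mult_ac cong: if_cong)
  also have "\<dots> = (\<Sum>S\<in>Pow ({..<d} - L). x ^ card S *
      (\<Sum>R\<in>Pow ({..<m} - L). cc (card S + card L) (card R + card L) * y ^ card R))"
    by (simp add: sum_Pow_disjoint sum_distrib_left)
  also have "\<dots> = (\<Sum>S\<in>Pow ({..<d} - L). x ^ card S *
      (\<Sum>b\<le>m - card L. of_nat (m - card L choose b) * cc (card S + card L) (b + card L) * y ^ b))"
    using sum_Pow_card[of "{..<m} - L" "\<lambda>r. cc (_ + card L) (r + card L) * y ^ r"] card_m
    by (simp add: mult_ac)
  also have "\<dots> = (\<Sum>a\<le>d - card L. of_nat (d - card L choose a) * x ^ a *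
      (\<Sum>b\<le>m - card L. of_nat (m - card L choose b) * cc (a + card L) (b + card L) * y ^ b))"
    using sum_Pow_card[of "{..<d} - L" "\<lambda>s. x ^ s * (\<Sum>b\<le>m - card L.
        of_nat (m - card L choose b) * cc (s + card L) (b + card L) * y ^ b)"] card_d
    by (simp add: mult_ac)
  finally show ?thesis .
qed

lemma mixed_ops_diagonal:
  fixes cc :: "nat \<Rightarrow> nat \<Rightarrow> complex" and \<beta> :: "nat \<Rightarrow> real"
  assumes "d \<le> m"
  shows "multiaffine d m (mixed_ops (\<lambda>S R. cc (card S) (card R)) \<beta> d) (\<lambda>_. x) (\<lambda>_. y)
    = (\<Sum>j\<le>d. of_real (\<Sum>L | L \<subseteq> {..<d} \<and> card L = j. \<Prod>l\<in>L. - \<beta> l) *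
         (\<Sum>a\<le>d - j. of_nat (d - j choose a) * x ^ a *
            (\<Sum>b\<le>m - j. of_nat (m - j choose b) * cc (a + j) (b + j) * y ^ b)))"
proof -
  define T where "T L = (of_real (\<Prod>l\<in>L. - \<beta> l) :: complex)" for L
  define G where "G j = (\<Sum>a\<le>d - j. of_nat (d - j choose a) * x ^ a *
      (\<Sum>b\<le>m - j. of_nat (m - j choose b) * cc (a + j) (b + j) * y ^ b))" for j
  define F where "F L S R = (if L \<inter> S = {} \<and> L \<inter> R = {} then
      cc (card S + card L) (card R + card L) * x ^ card S * y ^ card R else 0)" for L S R :: "nat set"
  have "multiaffine d m (mixed_ops (\<lambda>S R. cc (card S) (card R)) \<beta> d) (\<lambda>_. x) (\<lambda>_. y)
      = (\<Sum>S\<in>Pow {..<d}. \<Sum>R\<in>Pow {..<m}. \<Sum>L\<in>Pow {..<d}. T L * F L S R)"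
    unfolding multiaffine_diagonal mixed_ops_eq sum_distrib_right
  proof (intro sum.cong refl)
    fix S R L
    assume "S \<in> Pow {..<d}" "R \<in> Pow {..<m}" "L \<in> Pow {..<d}"
    hence "finite S" "finite R" "finite L"
      by (auto intro: finite_subset)
    thus "(if L \<inter> S = {} \<and> L \<inter> R = {} then of_real (\<Prod>l\<in>L. - \<beta> l) * cc (card (S \<union> L)) (card (R \<union> L))
          else 0) * x ^ card S * y ^ card R = T L * F L S R"
      by (auto simp: F_def T_def card_Un_disjoint Int_commute)
  qed
  also have "\<dots> = (\<Sum>S\<in>Pow {..<d}. \<Sum>L\<in>Pow {..<d}. \<Sum>R\<in>Pow {..<m}. T L * F L S R)"
    by (rule sum.cong[OF refl], rule sum.swap)
  also have "\<dots> = (\<Sum>L\<in>Pow {..<d}. T L * (\<Sum>S\<in>Pow {..<d}. \<Sum>R\<in>Pow {..<m}. F L S R))"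
    by (subst sum.swap) (simp add: sum_distrib_left)
  also have "\<dots> = (\<Sum>L\<in>Pow {..<d}. T L * G (card L))"
    unfolding F_def G_def using \<open>d \<le> m\<close> by (intro sum.cong refl) (simp add: sum_Pow_Pow_avoiding)
  also have "\<dots> = (\<Sum>j\<le>d. (\<Sum>L | L \<subseteq> {..<d} \<and> card L = j. T L) * G j)"
    using card_mono[of "{..<d}"]
    by (subst sum.group[symmetric, of _ _ card]) (auto intro!: sum.cong simp: sum_distrib_right)
  finally show ?thesis
    unfolding T_def G_def by simp
qed

section \<open>The rectangular additive convolution\<close>

lemma binomial_ratio:
  assumes "j \<le> k" "k \<le> n"
  shows "(fact (n - (k - j)) * fact (n - j)) / (fact n * fact (n - k))
       = (of_nat (n - j choose (n - k)) / of_nat (n choose (n - k + j)) :: 'a::field_char_0)"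
proof -
  have le1: "n - k \<le> n - j" and eq1: "(n - j) - (n - k) = k - j"
    and le2: "n - k + j \<le> n" and eq2: "n - (n - k + j) = k - j" and eq3: "n - (k - j) = n - k + j"
    using assms by auto
  have b1: "(of_nat (n - j choose (n - k)) :: 'a) = fact (n - j) / (fact (n - k) * fact (k - j))"
    using binomial_fact[OF le1, where 'a = 'a] unfolding eq1 .
  have b2: "(of_nat (n choose (n - k + j)) :: 'a) = fact n / (fact (n - k + j) * fact (k - j))"
    using binomial_fact[OF le2, where 'a = 'a] unfolding eq2 .
  show ?thesis
    unfolding eq3 b1 b2 by (simp add: field_simps)
qed

definition conv_weight :: "nat \<Rightarrow> nat \<Rightarrow> nat \<Rightarrow> nat \<Rightarrow> real" where
  "conv_weight d m j k = of_nat (d - j choose (d - k)) / of_nat (d choose (d - k + j)) *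
     (of_nat (m - j choose (m - k)) / of_nat (m choose (m - k + j)))"

lemma rect_conv_term:
  assumes "j \<le> k" "k \<le> d" "d \<le> m"
  shows "(-1) ^ k * ((fact (d - (k - j)) * fact (d - j)) / (fact d * fact (d - k)) *
          ((fact (m - (k - j)) * fact (m - j)) / (fact m * fact (m - k))) *
          sgn_coeff d p (k - j) * sgn_coeff d q j)
       = conv_weight d m j k * coeff p (d - k + j) * coeff q (d - j)"
proof -
  have sign: "(-1::real) ^ k * ((-1) ^ (k - j) * (-1) ^ j) = 1"
    using assms by (simp add: power_add[symmetric])
  have "d - (k - j) = d - k + j"
    using assms by simp
  moreover have "(fact (d - (k - j)) * fact (d - j)) / (fact d * fact (d - k))
      = (of_nat (d - j choose (d - k)) / of_nat (d choose (d - k + j)) :: real)"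
    using assms by (intro binomial_ratio) auto
  moreover have "(fact (m - (k - j)) * fact (m - j)) / (fact m * fact (m - k))
      = (of_nat (m - j choose (m - k)) / of_nat (m choose (m - k + j)) :: real)"
    using assms by (intro binomial_ratio) auto
  ultimately have "(-1) ^ k * ((fact (d - (k - j)) * fact (d - j)) / (fact d * fact (d - k)) *
        ((fact (m - (k - j)) * fact (m - j)) / (fact m * fact (m - k))) *
        sgn_coeff d p (k - j) * sgn_coeff d q j)
      = ((-1) ^ k * ((-1) ^ (k - j) * (-1) ^ j)) * (conv_weight d m j k * coeff p (d - k + j) * coeff q (d - j))"
    unfolding sgn_coeff_def conv_weight_def by (simp only:) (simp only: mult_ac)
  thus ?thesis
    unfolding sign by simp
qed

lemma rect_conv_conv_weight:
  assumes "d \<le> m"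
  shows "rect_conv d m p q
       = (\<Sum>k\<le>d. monom (\<Sum>j\<le>k. conv_weight d m j k * coeff p (d - k + j) * coeff q (d - j)) (d - k))"
  unfolding rect_conv_def atLeast0AtMost
proof (intro sum.cong refl arg_cong2[where f = monom])
  fix k
  assume "k \<in> {..d}"
  have "(-1) ^ k * (\<Sum>i\<le>k. let j = k - i in
          (fact (d - i) * fact (d - j)) / (fact d * fact (d - k)) *
          ((fact (m - i) * fact (m - j)) / (fact m * fact (m - k))) *
          sgn_coeff d p i * sgn_coeff d q j)
      = (\<Sum>j\<le>k. (-1) ^ k * ((fact (d - (k - j)) * fact (d - j)) / (fact d * fact (d - k)) *
          ((fact (m - (k - j)) * fact (m - j)) / (fact m * fact (m - k))) *
          sgn_coeff d p (k - j) * sgn_coeff d q j))"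
    unfolding sum_distrib_left atMost_atLeast0
    by (subst sum.atLeastAtMost_rev) (intro sum.cong refl, auto simp: Let_def)
  also have "\<dots> = (\<Sum>j\<le>k. conv_weight d m j k * coeff p (d - k + j) * coeff q (d - j))"
    using \<open>k \<in> {..d}\<close> assms by (intro sum.cong refl rect_conv_term) auto
  finally show "(-1) ^ k * (\<Sum>i\<le>k. let j = k - i in
          (fact (d - i) * fact (d - j)) / (fact d * fact (d - k)) *
          ((fact (m - i) * fact (m - j)) / (fact m * fact (m - k))) *
          sgn_coeff d p i * sgn_coeff d q j)
      = (\<Sum>j\<le>k. conv_weight d m j k * coeff p (d - k + j) * coeff q (d - j))" .
qed

lemma rect_conv_monic:
  assumes "coeff p d = 1" "coeff q d = 1"
  shows "degree (rect_conv d m p q) = d" "lead_coeff (rect_conv d m p q) = 1"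
proof -
  have "degree (rect_conv d m p q) \<le> d"
    unfolding rect_conv_def by (intro degree_sum_le) (auto intro: order_trans[OF degree_monom_le])
  moreover have delta: "(\<Sum>k\<in>{0..d}. if d - k = d then f k else 0) = f 0" for f :: "nat \<Rightarrow> real"
    by (subst sum.cong[OF refl, of _ _ "\<lambda>k. if k = 0 then f k else 0"]) auto
  have "coeff (rect_conv d m p q) d = 1"
    unfolding rect_conv_def coeff_sum coeff_monom delta using assms by (simp add: sgn_coeff_def)
  ultimately show "degree (rect_conv d m p q) = d" "lead_coeff (rect_conv d m p q) = 1"
    using le_degree[of "rect_conv d m p q" d] by auto
qed

text \<open>\<open>polarization_coeff d m p (card S) (card R)\<close> are the coefficients of the
  multiaffine polarization of \<open>u\<^bsup>m-d\<^esup> p(s u)\<close> in \<open>d\<close> copies of \<open>s\<close> and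
  \<open>m\<close> copies of \<open>u\<close>.\<close>

definition polarization_coeff :: "nat \<Rightarrow> nat \<Rightarrow> real poly \<Rightarrow> nat \<Rightarrow> nat \<Rightarrow> complex" where
  "polarization_coeff d m p a b =
     (if b = a + (m - d) then of_real (coeff p a) / (of_nat (d choose a) * of_nat (m choose b)) else 0)"

lemma sum_triangle_reverse:
  fixes h :: "nat \<Rightarrow> nat \<Rightarrow> 'a::comm_monoid_add"
  shows "(\<Sum>j\<le>d. \<Sum>a\<le>d - j. h j a) = (\<Sum>k\<le>d. \<Sum>j\<le>k. h j (d - k))"
proof -
  have "(\<Sum>j\<le>d. \<Sum>a\<le>d - j. h j a) = (\<Sum>j\<le>d. \<Sum>k\<in>{k \<in> {..d}. j \<le> k}. h j (d - k))"
    by (rule sum.cong[OF refl], rule sum.reindex_bij_witness[of _ "\<lambda>k. d - k" "\<lambda>a. d - a"]) auto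
  also have "\<dots> = (\<Sum>k\<le>d. \<Sum>j\<in>{j \<in> {..d}. j \<le> k}. h j (d - k))"
    by (rule sum.swap_restrict) auto
  also have "\<dots> = (\<Sum>k\<le>d. \<Sum>j\<le>k. h j (d - k))"
    by (intro sum.cong) auto
  finally show ?thesis .
qed

lemma sum_polarization_coeff:
  fixes y :: complex
  assumes "d \<le> m" "j \<le> d" "a \<le> d - j"
  shows "(\<Sum>b\<le>m - j. of_nat (m - j choose b) * polarization_coeff d m p (a + j) (b + j) * y ^ b)
       = of_nat (m - j choose (a + (m - d))) * of_real (coeff p (a + j))
         / (of_nat (d choose (a + j)) * of_nat (m choose (a + j + (m - d)))) * y ^ (a + (m - d))"
proof -
  have "(\<Sum>b\<le>m - j. of_nat (m - j choose b) * polarization_coeff d m p (a + j) (b + j) * y ^ b)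
      = (\<Sum>b\<le>m - j. if b = a + (m - d) then of_nat (m - j choose b) * of_real (coeff p (a + j))
          / (of_nat (d choose (a + j)) * of_nat (m choose (a + j + (m - d)))) * y ^ b else 0)"
    unfolding polarization_coeff_def by (intro sum.cong refl) (auto simp: ac_simps)
  also have "\<dots> = of_nat (m - j choose (a + (m - d))) * of_real (coeff p (a + j))
      / (of_nat (d choose (a + j)) * of_nat (m choose (a + j + (m - d)))) * y ^ (a + (m - d))"
    using assms by (simp add: le_diff_conv2)
  finally show ?thesis .
qed

lemma mixed_ops_polarization_diagonal:
  fixes \<beta> :: "nat \<Rightarrow> real" and x y :: complex
  assumes dm: "d \<le> m" and q: "q = (\<Prod>i<d. [:- \<beta> i, 1:])"
  shows "multiaffine d m (mixed_ops (\<lambda>S R. polarization_coeff d m p (card S) (card R)) \<beta> d) (\<lambda>_. x) (\<lambda>_. y)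
       = y ^ (m - d) * poly (map_poly of_real (rect_conv d m p q)) (x * y)"
proof -
  define h where "h j a = of_real (coeff q (d - j)) * of_nat (d - j choose a) * of_nat (m - j choose (a + (m - d)))
      * of_real (coeff p (a + j)) / (of_nat (d choose (a + j)) * of_nat (m choose (a + j + (m - d))))
      * x ^ a * y ^ (a + (m - d))" for j a
  have vieta: "(\<Sum>L | L \<subseteq> {..<d} \<and> card L = j. \<Prod>l\<in>L. - \<beta> l) = coeff q (d - j)" if "j \<le> d" for j
    unfolding q by (rule coeff_prod_linear_factors[OF that, symmetric])
  have "multiaffine d m (mixed_ops (\<lambda>S R. polarization_coeff d m p (card S) (card R)) \<beta> d) (\<lambda>_. x) (\<lambda>_. y)
      = (\<Sum>j\<le>d. \<Sum>a\<le>d - j. h j a)"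
    unfolding mixed_ops_diagonal[OF dm]
  proof (intro sum.cong refl)
    fix j
    assume "j \<in> {..d}"
    hence j: "j \<le> d"
      by simp
    show "of_real (\<Sum>L | L \<subseteq> {..<d} \<and> card L = j. \<Prod>l\<in>L. - \<beta> l) *
        (\<Sum>a\<le>d - j. of_nat (d - j choose a) * x ^ a *
          (\<Sum>b\<le>m - j. of_nat (m - j choose b) * polarization_coeff d m p (a + j) (b + j) * y ^ b))
      = (\<Sum>a\<le>d - j. h j a)"
      unfolding vieta[OF j] sum_distrib_left[of "of_real (coeff q (d - j))"]
      using sum_polarization_coeff[OF dm j] by (intro sum.cong refl) (simp add: h_def mult_ac)
  qed
  also have "\<dots> = (\<Sum>k\<le>d. \<Sum>j\<le>k. h j (d - k))"
    by (rule sum_triangle_reverse)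
  also have "\<dots> = (\<Sum>k\<le>d. \<Sum>j\<le>k. of_real (conv_weight d m j k * coeff p (d - k + j) * coeff q (d - j))
      * (y ^ (m - d) * (x * y) ^ (d - k)))"
  proof (intro sum.cong refl)
    fix k j
    assume "k \<in> {..d}" "j \<in> {..k}"
    hence e1: "d - k + (m - d) = m - k" and e2: "d - k + j + (m - d) = m - k + j"
      and xy: "y ^ (m - d) * (x * y) ^ (d - k) = x ^ (d - k) * y ^ (m - k)"
      using dm by (auto simp: power_mult_distrib power_add[symmetric])
    show "h j (d - k) = of_real (conv_weight d m j k * coeff p (d - k + j) * coeff q (d - j))
        * (y ^ (m - d) * (x * y) ^ (d - k))"
      unfolding h_def conv_weight_def e1 e2 xy by (simp add: mult_ac)
  qed
  also have "\<dots> = y ^ (m - d) * poly (map_poly of_real (rect_conv d m p q)) (x * y)"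
    unfolding rect_conv_conv_weight[OF dm] poly_map_poly_of_real_sum_monom
    by (simp add: sum_distrib_left sum_distrib_right mult_ac)
  finally show ?thesis .
qed

lemma stable_polarization:
  assumes dm: "d \<le> m" and p: "p = (\<Prod>i<d. [:- \<alpha> i, 1:])" and \<alpha>: "\<And>i. 0 \<le> \<alpha> i"
  shows "stable_multiaffine d m (\<lambda>S R. polarization_coeff d m p (card S) (card R))"
  unfolding stable_multiaffine_def multiaffine_def
proof (intro allI impI grace_walsh_szego_bivariate)
  fix s u :: complex
  assume s: "0 < Im s" and u: "0 < Im u"
  \<comment> \<open>The diagonal of the polarization is \<open>u\<^bsup>m-d\<^esup> p(s u)\<close>.\<close>
  define e where "e = m - d"
  have "(\<Sum>b\<le>m. of_nat (d choose a) * of_nat (m choose b) * polarization_coeff d m p a b * s ^ a * u ^ b)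
      = of_real (coeff p a) * s ^ a * u ^ (a + e)" if "a \<le> d" for a
  proof -
    have "(\<Sum>b\<le>m. of_nat (d choose a) * of_nat (m choose b) * polarization_coeff d m p a b * s ^ a * u ^ b)
        = (\<Sum>b\<le>m. if b = a + e then of_nat (d choose a) * of_nat (m choose b)
            * (of_real (coeff p a) / (of_nat (d choose a) * of_nat (m choose b))) * s ^ a * u ^ b else 0)"
      unfolding polarization_coeff_def e_def by (intro sum.cong refl) auto
    also have "\<dots> = of_real (coeff p a) * s ^ a * u ^ (a + e)"
      using that dm unfolding e_def by (simp add: le_diff_conv2)
    finally show ?thesis .
  qed
  hence "(\<Sum>a\<le>d. \<Sum>b\<le>m. of_nat (d choose a) * of_nat (m choose b) * polarization_coeff d m p a b * s ^ a * u ^ b)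
      = u ^ e * (\<Sum>a\<le>d. of_real (coeff p a) * (s * u) ^ a)"
    by (simp add: sum_distrib_left power_add power_mult_distrib mult_ac)
  also have "(\<Sum>a\<le>d. of_real (coeff p a) * (s * u) ^ a) = poly (map_poly of_real p) (s * u)"
    using poly_as_sum[of "map_poly complex_of_real p" d "s * u"]
    by (simp add: degree_map_poly coeff_map_poly p degree_prod_sum_eq)
  finally show "(\<Sum>a\<le>d. \<Sum>b\<le>m. of_nat (d choose a) * of_nat (m choose b) * polarization_coeff d m p a b * s ^ a * u ^ b) \<noteq> 0"
    using u nonneg_rooted_nonzero[of \<alpha>, OF \<alpha> upper_half_mult_notin_nonneg_Reals[OF s u]] unfolding p by auto
qed auto

theorem rect_conv_roots_nonneg:
  fixes t :: complex
  assumes dm: "d \<le> m"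
    and p: "p = (\<Prod>i<d. [:- \<alpha> i, 1:])" and \<alpha>: "\<And>i. 0 \<le> \<alpha> i"
    and q: "q = (\<Prod>i<d. [:- \<beta> i, 1:])" and \<beta>: "\<And>i. 0 \<le> \<beta> i"
    and root: "poly (map_poly of_real (rect_conv d m p q)) t = 0"
  shows "t \<in> \<real>\<^sub>\<ge>\<^sub>0"
proof (rule ccontr)
  assume "t \<notin> \<real>\<^sub>\<ge>\<^sub>0"
  then obtain w where w: "0 < Im w" "w * w = t"
    by (rule upper_half_sqrt)
  have "stable_multiaffine d m (mixed_ops (\<lambda>S R. polarization_coeff d m p (card S) (card R)) \<beta> d)"
    using stable_polarization[OF dm p \<alpha>] dm \<beta> by (rule stable_mixed_ops) simp
  hence "multiaffine d m (mixed_ops (\<lambda>S R. polarization_coeff d m p (card S) (card R)) \<beta> d) (\<lambda>_. w) (\<lambda>_. w) \<noteq> 0"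
    using w(1) unfolding stable_multiaffine_def by (metis (no_types))
  thus False
    unfolding mixed_ops_polarization_diagonal[OF dm q] w(2) root by simp
qed

corollary rect_conv_nonneg_rooted:
  assumes dm: "d \<le> m"
    and p: "p = (\<Prod>i<d. [:- \<alpha> i, 1:])" and \<alpha>: "\<And>i. 0 \<le> \<alpha> i"
    and q: "q = (\<Prod>i<d. [:- \<beta> i, 1:])" and \<beta>: "\<And>i. 0 \<le> \<beta> i"
  shows "\<exists>\<gamma>. (\<forall>i. 0 \<le> \<gamma> i) \<and> rect_conv d m p q = (\<Prod>i<d. [:- \<gamma> i, 1:])"
proof (rule monic_nonneg_rooted_factor)
  show "degree (rect_conv d m p q) = d" "lead_coeff (rect_conv d m p q) = 1"
    using rect_conv_monic monic_linear_factors unfolding p q by blast+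
qed (rule rect_conv_roots_nonneg[OF dm p \<alpha> q \<beta>])

theorem mainTheorem12:
  fixes A B :: "real ^ 'd ^ 'm" and p q :: "real poly"
  assumes "CARD('d) \<le> CARD('m)"
    and "\<forall>x. poly p x = det (x *\<^sub>R mat 1 - transpose A ** A)"
    and "\<forall>x. poly q x = det (x *\<^sub>R mat 1 - transpose B ** B)"
  shows "\<exists>C :: real ^ 'd ^ 'm. \<forall>x y :: real.
           y ^ (CARD('m) - CARD('d)) * poly (rect_conv CARD('d) CARD('m) p q) (x * y)
         = y ^ (CARD('m) - CARD('d)) * det ((x * y) *\<^sub>R mat 1 - transpose C ** C)"
proof -
  obtain \<alpha> where \<alpha>: "\<forall>i. 0 \<le> \<alpha> i" "p = (\<Prod>i<CARD('d). [:- \<alpha> i, 1:])"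
    using gram_charpoly_factor[of A] charpoly_eqI[OF assms(2)] by auto
  obtain \<beta> where \<beta>: "\<forall>i. 0 \<le> \<beta> i" "q = (\<Prod>i<CARD('d). [:- \<beta> i, 1:])"
    using gram_charpoly_factor[of B] charpoly_eqI[OF assms(3)] by auto
  obtain \<gamma> where \<gamma>: "\<forall>i. 0 \<le> \<gamma> i"
    "rect_conv CARD('d) CARD('m) p q = (\<Prod>i<CARD('d). [:- \<gamma> i, 1:])"
    using rect_conv_nonneg_rooted[OF assms(1) \<alpha>(2) _ \<beta>(2)] \<alpha>(1) \<beta>(1) by blast
  then obtain C :: "real ^ 'd ^ 'm" where "charpoly (transpose C ** C) = rect_conv CARD('d) CARD('m) p q"
    using exists_gram_charpoly[OF assms(1)] by metis
  moreover have "t *\<^sub>R mat 1 = (mat t :: real^'d^'d)" for t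
    by (simp add: vec_eq_iff mat_def)
  ultimately show ?thesis
    by (metis poly_charpoly)
qed

end
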